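(* Let $T$ be a Galton–Watson tree with finite alphabet $\mathbb{A}$ and offspring distribution $W$, and let $\mathscr{A}$ be a nonempty collection of nonempty subsets of $\mathbb{A}$. Define $g_{\mathscr{A}}:[0,1]\to[0,1]$ by $g_{\mathscr{A}}(s)=\mathbb{P}(W^{(s)}\notin\overline{\mathscr{A}})$ and $\tau(\mathscr{A})=\mathbb{P}(T\text{ has an }\mathscr{A}\text{-subtree})$. Then $1-\tau(\mathscr{A})$ is the smallest fixed point of $g_{\mathscr{A}}$ in $[0,1]$.
   Context: Trees with alphabet $\mathbb{A}$ are prefix-closed subsets of $\mathbb{A}^*$ containing the empty word; for $a\in T$, $W_T(a)=\{i\in\mathbb{A}: ai\in T\}$. The Galton–Watson tree with offspring distribution $W$ (a random subset of $\mathbb{A}$ with $\mathbb{P}(i\in W)>0$ for all $i$) is $T_0=\{\emptyset\}$, $T_n=\{aj:a\in T_{n-1},j\in W_a\}$, $(W_a)$ independent copies of $W$. An $\mathscr{A}$-subtree of $T$ is a tree $S\subseteq T$ with $W_S(a)\in\mathscr{A}$ for all $a\in S$. $\overline{\mathscr{A}}=\{S\subseteq\mathbb{A}:\exists X\in\mathscr{A},\ X\subseteq S\}$. For a random subset $X$ of a finite set $A$ and $s\in[0,1]$, $X^{(s)}=X\cap Y$ where $Y$ is independent of $X$ and $Y\sim\mathrm{Bin}(A,1-s)$, i.e. $\mathbb{P}(Y=B)=(1-s)^{|B|}s^{|A\setminus B|}$ for $B\subseteq A$. *)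

theory Defs
  imports "HOL-Probability.Probability"
begin

text \<open>Alphabet: a finite type 'a (the alphabet is UNIV :: 'a set). Words are lists.\<close>

definition is_tree :: "'a list set \<Rightarrow> bool" where
  "is_tree S \<longleftrightarrow> [] \<in> S \<and> (\<forall>a b. a @ b \<in> S \<longrightarrow> a \<in> S)"

definition children :: "'a list set \<Rightarrow> 'a list \<Rightarrow> 'a set" where
  "children T a = {i. a @ [i] \<in> T}"

definition is_subtree_in :: "'a set set \<Rightarrow> 'a list set \<Rightarrow> 'a list set \<Rightarrow> bool" where
  "is_subtree_in \<A> S T \<longleftrightarrow> is_tree S \<and> S \<subseteq> T \<and> (\<forall>a\<in>S. children S a \<in> \<A>)"

definition upclosure :: "'a set set \<Rightarrow> 'a set set" where
  "upclosure \<A> = {S. \<exists>X\<in>\<A>. X \<subseteq> S}"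

definition bin_subset :: "'a set \<Rightarrow> real \<Rightarrow> 'a set pmf" where
  "bin_subset A p = map_pmf (\<lambda>f. {i\<in>A. f i}) (Pi_pmf A False (\<lambda>_. bernoulli_pmf p))"

definition thinned :: "'a::finite set pmf \<Rightarrow> real \<Rightarrow> 'a set pmf" where
  "thinned W s = do { X \<leftarrow> W; Y \<leftarrow> bin_subset UNIV (1 - s); return_pmf (X \<inter> Y) }"

definition g_fun :: "'a::finite set pmf \<Rightarrow> 'a set set \<Rightarrow> real \<Rightarrow> real" where
  "g_fun W \<A> s = measure_pmf.prob (thinned W s) {S. S \<notin> upclosure \<A>}"

fun gw_gen :: "('a list \<Rightarrow> 'a set) \<Rightarrow> nat \<Rightarrow> 'a list set" where
  "gw_gen \<omega> 0 = {[]}"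
| "gw_gen \<omega> (Suc n) = {a @ [j] | a j. a \<in> gw_gen \<omega> n \<and> j \<in> \<omega> a}"

definition gw_tree :: "('a list \<Rightarrow> 'a set) \<Rightarrow> 'a list set" where
  "gw_tree \<omega> = (\<Union>n. gw_gen \<omega> n)"

text \<open>Probability space of i.i.d. offspring sets (W_a), a ranging over all words.\<close>
definition gw_space :: "'a set pmf \<Rightarrow> ('a list \<Rightarrow> 'a set) measure" where
  "gw_space W = PiM UNIV (\<lambda>_. measure_pmf W)"

definition tau :: "'a set pmf \<Rightarrow> 'a set set \<Rightarrow> real" where
  "tau W \<A> = measure (gw_space W)
      {\<omega> \<in> space (gw_space W). \<exists>S. is_subtree_in \<A> S (gw_tree \<omega>)}"

end

theory Submission
  imports Defs
begin

text \<open>Let q_n be the probability that the first n generations of T contain no \<A>-subtree of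
  height n, so q_0 = 0. An \<A>-subtree of height n + 1 exists iff the children of the root whose
  own subtrees carry one of height n form a set in the upward closure of \<A>. The children qualify
  independently, each with probability 1 - q_n, so their set is distributed as the thinning
  W^(q_n) and q_(n+1) = g(q_n). By Koenig's lemma (the alphabet is finite) T has an \<A>-subtree
  iff it has one of every height, so q_n tends to 1 - \<tau>(\<A>) by continuity of measure. Finally g
  is continuous and, by coupling the thinnings at two levels, monotone on [0,1]; hence its
  iterates from 0 increase to its least fixed point.\<close>

section \<open>Product measures of probability mass functions\<close>

lemma measure_pmf_prob_Collect_not:
  "measure_pmf.prob p {x. \<not> P x} = 1 - measure_pmf.prob p {x. P x}"
  using measure_pmf.prob_neg[of p P] by simp

lemma map_pmf_eq_bernoulli_pmf: "map_pmf P p = bernoulli_pmf (measure_pmf.prob p {x. P x})"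
proof (rule pmf_eqI)
  fix b :: bool
  show "pmf (map_pmf P p) b = pmf (bernoulli_pmf (measure_pmf.prob p {x. P x})) b"
    by (cases b) (simp_all add: pmf_map vimage_def measure_pmf_prob_Collect_not)
qed

lemma rel_pmf_Pi_pmf:
  assumes "finite A" and "R d d" and "\<And>x. x \<in> A \<Longrightarrow> rel_pmf R (p x) (q x)"
  shows "rel_pmf (\<lambda>f g. \<forall>x. R (f x) (g x)) (Pi_pmf A d p) (Pi_pmf A d q)"
proof -
  have "\<forall>x\<in>A. \<exists>pq. (\<forall>a b. (a, b) \<in> set_pmf pq \<longrightarrow> R a b)
      \<and> map_pmf fst pq = p x \<and> map_pmf snd pq = q x"
    using assms(3) by (simp add: rel_pmf.simps)
  then obtain pq where pq: "\<forall>x\<in>A. (\<forall>a b. (a, b) \<in> set_pmf (pq x) \<longrightarrow> R a b)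
      \<and> map_pmf fst (pq x) = p x \<and> map_pmf snd (pq x) = q x"
    by (rule bchoice[THEN exE])
  define PQ where "PQ = Pi_pmf A (d, d) pq"
  have "map_pmf (\<lambda>h. fst \<circ> h) PQ = Pi_pmf A d (\<lambda>x. map_pmf fst (pq x))"
    unfolding PQ_def by (rule Pi_pmf_map[symmetric]) (simp_all add: assms(1))
  also have "\<dots> = Pi_pmf A d p"
    using pq by (intro Pi_pmf_cong) auto
  finally have fst_PQ: "map_pmf (\<lambda>h. fst \<circ> h) PQ = Pi_pmf A d p" .
  have "map_pmf (\<lambda>h. snd \<circ> h) PQ = Pi_pmf A d (\<lambda>x. map_pmf snd (pq x))"
    unfolding PQ_def by (rule Pi_pmf_map[symmetric]) (simp_all add: assms(1))
  also have "\<dots> = Pi_pmf A d q"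
    using pq by (intro Pi_pmf_cong) auto
  finally have snd_PQ: "map_pmf (\<lambda>h. snd \<circ> h) PQ = Pi_pmf A d q" .
  show ?thesis
  proof (rule rel_pmf.intros[of "map_pmf (\<lambda>h. (fst \<circ> h, snd \<circ> h)) PQ"])
    fix f g assume "(f, g) \<in> set_pmf (map_pmf (\<lambda>h. (fst \<circ> h, snd \<circ> h)) PQ)"
    then obtain h where "h \<in> set_pmf PQ" "f = fst \<circ> h" "g = snd \<circ> h" by auto
    then show "\<forall>x. R (f x) (g x)"
      using pq assms(1,2)
      by (auto simp: PQ_def set_Pi_pmf PiE_dflt_def) (metis prod.collapse fst_conv snd_conv)
  qed (simp_all add: pmf.map_comp comp_def fst_PQ[unfolded comp_def] snd_PQ[unfolded comp_def])
qed

lemma rel_pmf_bernoulli_pmf_mono: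
  assumes "0 \<le> p" "p \<le> p'" "p' \<le> 1"
  shows "rel_pmf (\<le>) (bernoulli_pmf p) (bernoulli_pmf p')"
proof -
  define r where "r = (if p = 1 then 0 else (p' - p) / (1 - p))"
  have r: "0 \<le> r" "r \<le> 1" "p + r * (1 - p) = p'"
    using assms by (auto simp: r_def field_simps)
  have "bernoulli_pmf p' =
      bind_pmf (bernoulli_pmf p) (\<lambda>a. if a then return_pmf True else bernoulli_pmf r)"
  proof (rule pmf_eqI)
    fix x :: bool
    show "pmf (bernoulli_pmf p') x =
        pmf (bind_pmf (bernoulli_pmf p) (\<lambda>a. if a then return_pmf True else bernoulli_pmf r)) x"
      using assms r by (cases x) (simp_all add: pmf_bind algebra_simps)
  qed
  moreover have "rel_pmf (\<le>) (bind_pmf (bernoulli_pmf p) return_pmf)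
      (bind_pmf (bernoulli_pmf p) (\<lambda>a. if a then return_pmf True else bernoulli_pmf r))"
    by (rule rel_pmf_bindI[OF pmf.rel_refl]) (auto simp: rel_pmf_return_pmf1)
  ultimately show ?thesis by (simp add: bind_return_pmf')
qed

lemma distr_restrict_Pi_pmf:
  assumes "finite J"
  shows "distr (measure_pmf (Pi_pmf J d p)) (PiM J (\<lambda>i. measure_pmf (p i))) (\<lambda>f. restrict f J)
       = PiM J (\<lambda>i. measure_pmf (p i))"
proof -
  interpret product_prob_space "\<lambda>i. measure_pmf (p i)" UNIV
    by (rule product_prob_spaceI) (simp add: measure_pmf.prob_space_axioms)
  show ?thesis
  proof (rule PiM_eqI)
    fix A assume "\<And>i. i \<in> J \<Longrightarrow> A i \<in> sets (measure_pmf (p i))"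
    have "emeasure (distr (measure_pmf (Pi_pmf J d p)) (PiM J (\<lambda>i. measure_pmf (p i)))
        (\<lambda>f. restrict f J)) (Pi\<^sub>E J A)
      = emeasure (measure_pmf (Pi_pmf J d p)) ((\<lambda>f. restrict f J) -` Pi\<^sub>E J A)"
      using assms by (subst emeasure_distr) (auto simp: space_PiM intro!: sets_PiM_I_finite)
    also have "\<dots> = emeasure (measure_pmf (Pi_pmf J d p)) (PiE_dflt J d A)"
      using assms by (intro emeasure_eq_AE AE_pmfI) (auto simp: PiE_dflt_def set_Pi_pmf)
    also have "\<dots> = (\<Prod>i\<in>J. emeasure (measure_pmf (p i)) (A i))"
      using assms
      by (simp add: measure_pmf.emeasure_eq_measure measure_Pi_pmf_PiE_dflt prod_ennreal)
    finally show "emeasure (distr (measure_pmf (Pi_pmf J d p)) (PiM J (\<lambda>i. measure_pmf (p i)))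
        (\<lambda>f. restrict f J)) (Pi\<^sub>E J A) = (\<Prod>i\<in>J. emeasure (measure_pmf (p i)) (A i))" .
  qed (use assms in simp_all)
qed

lemma sets_PiM_measure_pmf_countable:
  fixes p :: "'i \<Rightarrow> 'b::countable pmf"
  assumes "finite J" and "X \<subseteq> space (PiM J (\<lambda>i. measure_pmf (p i)))"
  shows "X \<in> sets (PiM J (\<lambda>i. measure_pmf (p i)))"
proof (rule sets.countable)
  fix f assume "f \<in> X"
  with assms(2) have "f \<in> extensional J"
    by (auto simp: space_PiM PiE_def)
  then have "{f} = PiE J (\<lambda>i. {f i})"
    by (simp add: PiE_singleton)
  then show "{f} \<in> sets (PiM J (\<lambda>i. measure_pmf (p i)))"
    using assms(1) by (simp add: sets_PiM_I_finite)
next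
  have "countable (PiE J (\<lambda>_. UNIV :: 'b set))"
    using assms(1) by (simp add: countable_PiE)
  then show "countable X"
    by (rule countable_subset[rotated]) (use assms(2) in \<open>simp add: space_PiM\<close>)
qed

lemma measure_PiM_pmf_cylinder:
  fixes p :: "'i \<Rightarrow> 'b::countable pmf"
  assumes "finite J" "J \<subseteq> I" and restrict_irrelevant: "\<And>\<omega>. P (restrict \<omega> J) = P \<omega>"
  defines "M \<equiv> PiM I (\<lambda>i. measure_pmf (p i))"
  shows "{\<omega> \<in> space M. P \<omega>} \<in> sets M"
    and "measure M {\<omega> \<in> space M. P \<omega>} = measure_pmf.prob (Pi_pmf J d p) {f. P f}"
proof -
  interpret product_prob_space "\<lambda>i. measure_pmf (p i)" I
    by (rule product_prob_spaceI) (simp add: measure_pmf.prob_space_axioms)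
  define X where "X = {f \<in> space (PiM J (\<lambda>i. measure_pmf (p i))). P f}"
  have X: "X \<in> sets (PiM J (\<lambda>i. measure_pmf (p i)))"
    using assms(1) by (rule sets_PiM_measure_pmf_countable) (simp add: X_def)
  have emb: "prod_emb I (\<lambda>i. measure_pmf (p i)) J X = {\<omega> \<in> space M. P \<omega>}"
    using assms(2) by (auto simp: prod_emb_def X_def M_def space_PiM restrict_irrelevant)
  have "prod_emb I (\<lambda>i. measure_pmf (p i)) J X \<in> sets M"
    unfolding M_def using assms(2) X by (rule measurable_prod_emb)
  then show "{\<omega> \<in> space M. P \<omega>} \<in> sets M"
    unfolding emb .
  have "measure M {\<omega> \<in> space M. P \<omega>} = measure (PiM J (\<lambda>i. measure_pmf (p i))) X"
    unfolding emb[symmetric] unfolding M_def measure_def using assms(1,2) X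
    by (simp add: emeasure_PiM_emb')
  also have "\<dots> = measure (distr (measure_pmf (Pi_pmf J d p)) (PiM J (\<lambda>i. measure_pmf (p i)))
      (\<lambda>f. restrict f J)) X"
    by (simp add: distr_restrict_Pi_pmf assms(1))
  also have "\<dots> = measure_pmf.prob (Pi_pmf J d p) {f. P f}"
    using X by (subst measure_distr) (auto simp: X_def space_PiM restrict_irrelevant)
  finally show "measure M {\<omega> \<in> space M. P \<omega>} = measure_pmf.prob (Pi_pmf J d p) {f. P f}" .
qed

section \<open>Iterating a monotone map of the unit interval\<close>

lemma iterates_tendsto_least_fixed_point:
  fixes g :: "real \<Rightarrow> real" and q :: "nat \<Rightarrow> real"
  assumes cont: "continuous_on {0..1} g"
    and mono: "\<And>s t. 0 \<le> s \<Longrightarrow> s \<le> t \<Longrightarrow> t \<le> 1 \<Longrightarrow> g s \<le> g t"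
    and maps_to: "\<And>s. s \<in> {0..1} \<Longrightarrow> g s \<in> {0..1}"
    and q: "q 0 = 0" "\<And>n. q (Suc n) = g (q n)" and lim: "q \<longlonglongrightarrow> x"
  shows "x \<in> {0..1}" and "g x = x" and "\<And>s. s \<in> {0..1} \<Longrightarrow> g s = s \<Longrightarrow> x \<le> s"
proof -
  have q01: "q n \<in> {0..1}" for n
  proof (induction n)
    case (Suc n)
    then show ?case using maps_to by (simp add: q)
  qed (simp add: q)
  show x01: "x \<in> {0..1}"
    using closed_atLeastAtMost q01 lim by (rule closed_sequentially)
  have "(\<lambda>n. g (q n)) \<longlonglongrightarrow> g x"
    using continuous_on_tendsto_compose[OF cont lim x01] q01 by simp
  moreover have "(\<lambda>n. g (q n)) \<longlonglongrightarrow> x"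
    using LIMSEQ_Suc[OF lim] by (simp add: q)
  ultimately show "g x = x" by (rule LIMSEQ_unique)
  fix s assume s: "s \<in> {0..1}" "g s = s"
  have "q n \<le> s" for n
  proof (induction n)
    case (Suc n)
    then have "g (q n) \<le> g s" using q01[of n] s(1) by (intro mono) auto
    then show ?case by (simp add: q s(2))
  qed (use s in \<open>simp add: q\<close>)
  then show "x \<le> s" using lim by (intro LIMSEQ_le_const2) auto
qed

section \<open>Subtrees of Galton--Watson trees\<close>

lemma gw_gen_iff:
  "w \<in> gw_gen \<omega> n \<longleftrightarrow> length w = n \<and> (\<forall>k<n. w ! k \<in> \<omega> (take k w))"
proof (induction n arbitrary: w)
  case (Suc n)
  show ?case
  proof
    assume "w \<in> gw_gen \<omega> (Suc n)"
    then obtain a j where "w = a @ [j]" "a \<in> gw_gen \<omega> n" "j \<in> \<omega> a" by auto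
    then show "length w = Suc n \<and> (\<forall>k<Suc n. w ! k \<in> \<omega> (take k w))"
      using Suc.IH by (auto simp: nth_append less_Suc_eq)
  next
    assume w: "length w = Suc n \<and> (\<forall>k<Suc n. w ! k \<in> \<omega> (take k w))"
    then obtain a j where a: "w = a @ [j]"
      by (metis length_Suc_conv_rev)
    with w have "a \<in> gw_gen \<omega> n" "j \<in> \<omega> a"
      using Suc.IH by (auto simp: nth_append less_Suc_eq)
    with a show "w \<in> gw_gen \<omega> (Suc n)" by auto
  qed
qed simp

lemma gw_tree_iff: "w \<in> gw_tree \<omega> \<longleftrightarrow> (\<forall>k<length w. w ! k \<in> \<omega> (take k w))"
  unfolding gw_tree_def by (simp add: gw_gen_iff)

lemma snoc_in_gw_tree_iff: "a @ [i] \<in> gw_tree \<omega> \<longleftrightarrow> a \<in> gw_tree \<omega> \<and> i \<in> \<omega> a"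
  by (auto simp: gw_tree_iff nth_append less_Suc_eq)

lemma is_tree_gw_tree: "is_tree (gw_tree \<omega>)"
  unfolding is_tree_def by (auto simp: gw_tree_iff nth_append)

lemma upclosure_mono: "X \<in> upclosure \<A> \<Longrightarrow> X \<subseteq> Y \<Longrightarrow> Y \<in> upclosure \<A>"
  unfolding upclosure_def by auto

fun has_subtree_upto :: "'a set set \<Rightarrow> nat \<Rightarrow> ('a list \<Rightarrow> 'a set) \<Rightarrow> bool" where
  "has_subtree_upto \<A> 0 \<omega> = True"
| "has_subtree_upto \<A> (Suc n) \<omega> =
     ({i \<in> \<omega> []. has_subtree_upto \<A> n (\<lambda>b. \<omega> (i # b))} \<in> upclosure \<A>)"

lemma has_subtree_upto_cong:
  "(\<And>w. length w < n \<Longrightarrow> \<omega> w = \<omega>' w) \<Longrightarrow> has_subtree_upto \<A> n \<omega> = has_subtree_upto \<A> n \<omega>'"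
proof (induction n arbitrary: \<omega> \<omega>')
  case (Suc n)
  have "has_subtree_upto \<A> n (\<lambda>b. \<omega> (i # b)) = has_subtree_upto \<A> n (\<lambda>b. \<omega>' (i # b))" for i
    by (rule Suc.IH) (simp add: Suc.prems)
  then show ?case using Suc.prems[of "[]"] by simp
qed simp

lemma has_subtree_upto_antimono:
  "m \<le> n \<Longrightarrow> has_subtree_upto \<A> n \<omega> \<Longrightarrow> has_subtree_upto \<A> m \<omega>"
proof (induction m arbitrary: n \<omega>)
  case (Suc m)
  then obtain n' where n: "n = Suc n'" "m \<le> n'"
    by (metis Suc_le_D Suc_le_mono)
  have "{i \<in> \<omega> []. has_subtree_upto \<A> n' (\<lambda>b. \<omega> (i # b))}
      \<subseteq> {i \<in> \<omega> []. has_subtree_upto \<A> m (\<lambda>b. \<omega> (i # b))}"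
    using Suc.IH n(2) by blast
  with Suc.prems n(1) show ?case by (auto intro: upclosure_mono)
qed simp

lemma has_subtree_upto_if_subtree:
  assumes S: "is_subtree_in \<A> S (gw_tree \<omega>)" and "a \<in> S"
  shows "has_subtree_upto \<A> n (\<lambda>b. \<omega> (a @ b))"
  using \<open>a \<in> S\<close>
proof (induction n arbitrary: a)
  case (Suc n)
  have "children S a \<subseteq> {i \<in> \<omega> a. has_subtree_upto \<A> n (\<lambda>b. \<omega> (a @ i # b))}"
  proof
    fix i assume "i \<in> children S a"
    then have ai: "a @ [i] \<in> S" by (simp add: children_def)
    with S have "i \<in> \<omega> a"
      by (auto simp: is_subtree_in_def snoc_in_gw_tree_iff)
    with Suc.IH[OF ai] show "i \<in> {i \<in> \<omega> a. has_subtree_upto \<A> n (\<lambda>b. \<omega> (a @ i # b))}"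
      by simp
  qed
  moreover have "children S a \<in> \<A>" using S Suc.prems by (simp add: is_subtree_in_def)
  ultimately show ?case by (auto simp: upclosure_def)
qed simp

text \<open>Koenig's lemma: as the alphabet is finite, one depth \<open>n\<close> separates the children
  whose subtrees carry \<open>\<A>\<close>-subtrees of every height from the others.\<close>
lemma upclosure_children_with_subtrees:
  fixes \<omega> :: "'a::finite list \<Rightarrow> 'a set"
  assumes "\<forall>n. has_subtree_upto \<A> n \<omega>"
  shows "{i \<in> \<omega> []. \<forall>n. has_subtree_upto \<A> n (\<lambda>b. \<omega> (i # b))} \<in> upclosure \<A>"
proof -
  let ?P = "\<lambda>n i. has_subtree_upto \<A> n (\<lambda>b. \<omega> (i # b))"
  have "\<forall>\<^sub>F n in sequentially. ?P n i \<longrightarrow> (\<forall>m. ?P m i)" for i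
  proof (cases "\<forall>m. ?P m i")
    case False
    then obtain m where "\<not> ?P m i" by blast
    then have "\<forall>n\<ge>m. \<not> ?P n i" using has_subtree_upto_antimono by blast
    then show ?thesis unfolding eventually_sequentially by blast
  qed simp
  then have "\<forall>\<^sub>F n in sequentially. \<forall>i. ?P n i \<longrightarrow> (\<forall>m. ?P m i)"
    by (rule eventually_all_finite)
  then obtain N where "\<forall>n\<ge>N. \<forall>i. ?P n i \<longrightarrow> (\<forall>m. ?P m i)"
    unfolding eventually_sequentially ..
  then have "{i \<in> \<omega> []. ?P N i} \<subseteq> {i \<in> \<omega> []. \<forall>m. ?P m i}" by blast
  moreover from assms have "has_subtree_upto \<A> (Suc N) \<omega>" ..
  ultimately show ?thesis by (auto elim: upclosure_mono)
qed

lemma subtree_if_has_subtree_upto_all: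
  fixes \<omega> :: "'a::finite list \<Rightarrow> 'a set"
  assumes "\<forall>n. has_subtree_upto \<A> n \<omega>"
  shows "\<exists>S. is_subtree_in \<A> S (gw_tree \<omega>)"
proof -
  define G where "G a \<longleftrightarrow> (\<forall>n. has_subtree_upto \<A> n (\<lambda>b. \<omega> (a @ b)))" for a
  have "\<exists>X\<in>\<A>. X \<subseteq> {i \<in> \<omega> a. G (a @ [i])}" if "G a" for a
    using upclosure_children_with_subtrees[of \<A> "\<lambda>b. \<omega> (a @ b)"] that
    by (simp add: G_def upclosure_def)
  then obtain C where C: "\<And>a. G a \<Longrightarrow> C a \<in> \<A> \<and> C a \<subseteq> {i \<in> \<omega> a. G (a @ [i])}"
    by metis
  define S where "S = gw_tree C"
  have S: "G w \<and> w \<in> gw_tree \<omega>" if "w \<in> S" for w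
    using that
  proof (induction w rule: rev_induct)
    case Nil
    then show ?case using assms by (simp add: G_def gw_tree_iff)
  next
    case (snoc i a)
    then have "G a" "a \<in> gw_tree \<omega>" "i \<in> C a"
      by (simp_all add: S_def snoc_in_gw_tree_iff)
    with C[of a] show ?case by (auto simp: snoc_in_gw_tree_iff)
  qed
  have "is_subtree_in \<A> S (gw_tree \<omega>)"
    unfolding is_subtree_in_def
  proof (intro conjI ballI subsetI)
    fix a assume "a \<in> S"
    then have "children S a = C a"
      by (simp add: S_def children_def snoc_in_gw_tree_iff)
    moreover have "G a" using S \<open>a \<in> S\<close> by blast
    ultimately show "children S a \<in> \<A>" using C by simp
  qed (use S in \<open>auto simp: S_def is_tree_gw_tree\<close>)
  then show ?thesis ..
qed

lemma subtree_iff_has_subtree_upto_all: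
  fixes \<omega> :: "'a::finite list \<Rightarrow> 'a set"
  shows "(\<exists>S. is_subtree_in \<A> S (gw_tree \<omega>)) \<longleftrightarrow> (\<forall>n. has_subtree_upto \<A> n \<omega>)"
proof
  assume "\<exists>S. is_subtree_in \<A> S (gw_tree \<omega>)"
  then obtain S where S: "is_subtree_in \<A> S (gw_tree \<omega>)" ..
  then have "[] \<in> S" unfolding is_subtree_in_def is_tree_def by (elim conjE)
  from has_subtree_upto_if_subtree[OF S this] show "\<forall>n. has_subtree_upto \<A> n \<omega>" by simp
qed (rule subtree_if_has_subtree_upto_all)

section \<open>The first generations\<close>

definition short_words :: "nat \<Rightarrow> 'a list set" where
  "short_words n = {w. length w < n}"

lemma finite_short_words: "finite (short_words n :: 'a::finite list set)"
proof -
  have "finite {w :: 'a list. set w \<subseteq> UNIV \<and> length w \<le> n}"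
    by (rule finite_lists_length_le) simp
  then show ?thesis by (rule finite_subset[rotated]) (auto simp: short_words_def)
qed

lemma short_words_Suc:
  "short_words (Suc n) = insert [] ((\<lambda>(i, b). i # b) ` (UNIV \<times> short_words n))"
proof (intro set_eqI iffI)
  fix w :: "'a list"
  assume "w \<in> short_words (Suc n)"
  then show "w \<in> insert [] ((\<lambda>(i, b). i # b) ` (UNIV \<times> short_words n))"
    by (cases w) (auto simp: short_words_def)
qed (auto simp: short_words_def)

lemma prod_short_words_Suc:
  fixes h :: "'a::finite list \<Rightarrow> 'b::comm_monoid_mult"
  shows "(\<Prod>w\<in>short_words (Suc n). h w) = h [] * (\<Prod>i\<in>UNIV. \<Prod>b\<in>short_words n. h (i # b))"
proof -
  have "(\<Prod>w\<in>short_words (Suc n). h w)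
      = h [] * (\<Prod>w\<in>(\<lambda>(i, b). i # b) ` (UNIV \<times> short_words n). h w)"
    unfolding short_words_Suc by (subst prod.insert) (auto simp: finite_short_words)
  also have "(\<Prod>w\<in>(\<lambda>(i, b). i # b) ` (UNIV \<times> short_words n). h w)
      = (\<Prod>(i, b)\<in>UNIV \<times> short_words n. h (i # b))"
    by (subst prod.reindex) (auto simp: inj_on_def case_prod_beta)
  finally show ?thesis by (simp add: prod.cartesian_product)
qed

definition offspring_upto :: "'a set pmf \<Rightarrow> nat \<Rightarrow> ('a list \<Rightarrow> 'a set) pmf" where
  "offspring_upto W n = Pi_pmf (short_words n) {} (\<lambda>_. W)"

lemma pmf_offspring_upto:
  fixes W :: "'a::finite set pmf"
  shows "pmf (offspring_upto W n) \<omega> =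
    (if \<forall>w. n \<le> length w \<longrightarrow> \<omega> w = {} then \<Prod>w\<in>short_words n. pmf W (\<omega> w) else 0)"
  unfolding offspring_upto_def
  by (subst pmf_Pi[OF finite_short_words]) (auto simp: short_words_def not_less)

fun graft :: "'a set \<Rightarrow> ('a \<Rightarrow> 'a list \<Rightarrow> 'a set) \<Rightarrow> 'a list \<Rightarrow> 'a set" where
  "graft X F [] = X"
| "graft X F (i # b) = F i b"

lemma graft_split: "graft (\<omega> []) (\<lambda>i b. \<omega> (i # b)) = \<omega>"
proof
  show "graft (\<omega> []) (\<lambda>i b. \<omega> (i # b)) w = \<omega> w" for w by (cases w) simp_all
qed

lemma inj_graft: "inj (case_prod graft)"
proof (rule injI, clarify)
  fix X Y :: "'a set" and F G :: "'a \<Rightarrow> 'a list \<Rightarrow> 'a set"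
  assume "graft X F = graft Y G"
  from fun_cong[OF this, of "[]"] fun_cong[OF this, of "_ # _"] show "X = Y \<and> F = G"
    by (auto simp: fun_eq_iff)
qed

lemma offspring_upto_Suc:
  fixes W :: "'a::finite set pmf"
  shows "offspring_upto W (Suc n) =
    map_pmf (case_prod graft) (pair_pmf W (Pi_pmf UNIV (\<lambda>_. {}) (\<lambda>_. offspring_upto W n)))"
proof (rule pmf_eqI)
  fix \<omega> :: "'a list \<Rightarrow> 'a set"
  let ?Q = "Pi_pmf UNIV (\<lambda>_. {}) (\<lambda>_. offspring_upto W n)"
  have "pmf (map_pmf (case_prod graft) (pair_pmf W ?Q)) \<omega>
      = pmf W (\<omega> []) * (\<Prod>i\<in>UNIV. pmf (offspring_upto W n) (\<lambda>b. \<omega> (i # b)))"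
    using pmf_map_inj'[OF inj_graft, of _ "(\<omega> [], \<lambda>i b. \<omega> (i # b))"]
    by (simp add: graft_split pmf_pair pmf_Pi)
  also have "\<dots> = pmf (offspring_upto W (Suc n)) \<omega>"
  proof (cases "\<forall>w. Suc n \<le> length w \<longrightarrow> \<omega> w = {}")
    case True
    then have "\<forall>b. n \<le> length b \<longrightarrow> \<omega> (i # b) = {}" for i by simp
    with True show ?thesis by (simp add: pmf_offspring_upto prod_short_words_Suc)
  next
    case False
    then obtain i b where "n \<le> length b" "\<omega> (i # b) \<noteq> {}"
      by (metis Suc_le_length_iff)
    then have "pmf (offspring_upto W n) (\<lambda>b. \<omega> (i # b)) = 0"
      by (auto simp: pmf_offspring_upto)
    with False show ?thesis by (auto simp: pmf_offspring_upto intro!: prod_zero)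
  qed
  finally show "pmf (offspring_upto W (Suc n)) \<omega>
      = pmf (map_pmf (case_prod graft) (pair_pmf W ?Q)) \<omega>" ..
qed

section \<open>The thinning function\<close>

definition coins :: "real \<Rightarrow> ('a::finite \<Rightarrow> bool) pmf" where
  "coins p = Pi_pmf UNIV False (\<lambda>_. bernoulli_pmf p)"

lemma thinned_eq_map_coins:
  "thinned W s = map_pmf (\<lambda>(X, f). {i \<in> X. f i}) (pair_pmf W (coins (1 - s)))"
  unfolding thinned_def bin_subset_def coins_def pair_pmf_def
  by (simp add: map_bind_pmf bind_map_pmf bind_return_pmf map_pmf_def[symmetric] bind_assoc_pmf
      Int_def pmf.map_comp o_def)

lemma g_fun_eq_prob_coins:
  "g_fun W \<A> s
    = measure_pmf.prob (pair_pmf W (coins (1 - s))) {(X, f). {i \<in> X. f i} \<notin> upclosure \<A>}"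
  unfolding g_fun_def thinned_eq_map_coins by (simp add: vimage_def case_prod_unfold)

lemma pmf_coins: "0 \<le> p \<Longrightarrow> p \<le> 1 \<Longrightarrow> pmf (coins p) f = (\<Prod>i\<in>UNIV. if f i then p else 1 - p)"
  unfolding coins_def by (subst pmf_Pi) (auto intro!: prod.cong)

lemma rel_pmf_coins_mono:
  assumes "0 \<le> p" "p \<le> p'" "p' \<le> 1"
  shows "rel_pmf (\<le>) (coins p :: ('a::finite \<Rightarrow> bool) pmf) (coins p')"
proof -
  have "rel_pmf (\<lambda>f g. \<forall>x. f x \<le> g x)
      (Pi_pmf UNIV False (\<lambda>_. bernoulli_pmf p))
      (Pi_pmf (UNIV :: 'a set) False (\<lambda>_. bernoulli_pmf p'))"
    by (rule rel_pmf_Pi_pmf) (simp, simp, rule rel_pmf_bernoulli_pmf_mono[OF assms])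
  moreover have "(\<lambda>f g :: 'a \<Rightarrow> bool. \<forall>x. f x \<le> g x) = (\<le>)"
    by (intro ext) (simp add: le_fun_def)
  ultimately show ?thesis by (simp add: coins_def)
qed

lemma g_fun_mono:
  fixes W :: "'a::finite set pmf"
  assumes "0 \<le> s" "s \<le> t" "t \<le> 1"
  shows "g_fun W \<A> s \<le> g_fun W \<A> t"
proof -
  let ?bad = "{(X, f). {i \<in> X. f i} \<notin> upclosure \<A>}"
  have "rel_pmf (\<le>) (coins (1 - t) :: ('a \<Rightarrow> bool) pmf) (coins (1 - s))"
    by (rule rel_pmf_coins_mono) (use assms in auto)
  then have "rel_pmf (\<le>)\<inverse>\<inverse> (coins (1 - s) :: ('a \<Rightarrow> bool) pmf) (coins (1 - t))"
    by (simp only: pmf.rel_flip)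
  then have "rel_pmf (rel_prod (=) (\<le>)\<inverse>\<inverse>) (pair_pmf W (coins (1 - s) :: ('a \<Rightarrow> bool) pmf))
      (pair_pmf W (coins (1 - t)))"
    by (simp add: rel_pmf_rel_prod pmf.rel_eq)
  then have "g_fun W \<A> s
      \<le> measure_pmf.prob (pair_pmf W (coins (1 - t))) {y. \<exists>x\<in>?bad. rel_prod (=) (\<le>)\<inverse>\<inverse> x y}"
    unfolding g_fun_eq_prob_coins by (rule rel_pmf_measureD)
  also have "\<dots> \<le> g_fun W \<A> t"
    unfolding g_fun_eq_prob_coins
  proof (rule measure_pmf.finite_measure_mono)
    show "{y. \<exists>x\<in>?bad. rel_prod (=) (\<le>)\<inverse>\<inverse> x y} \<subseteq> ?bad"
    proof
      fix y assume "y \<in> {y. \<exists>x\<in>?bad. rel_prod (=) (\<le>)\<inverse>\<inverse> x y}"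
      then obtain X f g where "y = (X, f)" "{i \<in> X. g i} \<notin> upclosure \<A>" "f \<le> g"
        by (auto elim!: rel_prod.cases)
      moreover have "{i \<in> X. f i} \<subseteq> {i \<in> X. g i}" using \<open>f \<le> g\<close> by (auto simp: le_fun_def)
      ultimately show "y \<in> ?bad" using upclosure_mono by blast
    qed
  qed simp
  finally show ?thesis .
qed

lemma continuous_on_g_fun:
  fixes W :: "'a::finite set pmf"
  shows "continuous_on {0..1} (g_fun W \<A>)"
proof (rule continuous_on_eq)
  let ?bad = "{(X, f :: 'a \<Rightarrow> bool). {i \<in> X. f i} \<notin> upclosure \<A>}"
  show "continuous_on {0..1}
      (\<lambda>s. \<Sum>z\<in>?bad. pmf W (fst z) * (\<Prod>i\<in>UNIV. if snd z i then 1 - s else s))"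
  proof -
    have "continuous_on {0..1} (\<lambda>s::real. if b then 1 - s else s)" for b
      by (cases b) (auto intro!: continuous_intros)
    then show ?thesis by (intro continuous_intros)
  qed
  show "(\<Sum>z\<in>?bad. pmf W (fst z) * (\<Prod>i\<in>UNIV. if snd z i then 1 - s else s)) = g_fun W \<A> s"
    if "s \<in> {0..1}" for s
  proof -
    have "pmf (coins (1 - s)) f = (\<Prod>i\<in>UNIV. if f i then 1 - s else s)" for f :: "'a \<Rightarrow> bool"
      using that by (auto simp: pmf_coins intro!: prod.cong)
    then show ?thesis
      unfolding g_fun_eq_prob_coins measure_measure_pmf_finite[OF finite]
      by (intro sum.cong) (auto simp: pmf_pair)
  qed
qed

section \<open>The probability of no subtree of height n\<close>

definition no_subtree_prob :: "'a set pmf \<Rightarrow> 'a set set \<Rightarrow> nat \<Rightarrow> real" where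
  "no_subtree_prob W \<A> n = measure_pmf.prob (offspring_upto W n) {\<omega>. \<not> has_subtree_upto \<A> n \<omega>}"

lemma no_subtree_prob_0: "no_subtree_prob W \<A> 0 = 0"
  by (simp add: no_subtree_prob_def)

lemma no_subtree_prob_Suc:
  fixes W :: "'a::finite set pmf"
  shows "no_subtree_prob W \<A> (Suc n) = g_fun W \<A> (no_subtree_prob W \<A> n)"
proof -
  define Q where "Q = Pi_pmf (UNIV :: 'a set) (\<lambda>_. {}) (\<lambda>_. offspring_upto W n)"
  define h where "h = (\<lambda>(X :: 'a set, F). (X, \<lambda>i :: 'a. has_subtree_upto \<A> n (F i)))"
  have "map_pmf (\<lambda>F i. has_subtree_upto \<A> n (F i)) Q
      = Pi_pmf UNIV (has_subtree_upto \<A> n (\<lambda>_. {}))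
          (\<lambda>_. map_pmf (has_subtree_upto \<A> n) (offspring_upto W n))"
    unfolding Q_def by (subst Pi_pmf_map) (auto simp: comp_def intro!: map_pmf_cong)
  also have "\<dots> = coins (1 - no_subtree_prob W \<A> n)"
    using Pi_pmf_default_swap[of "UNIV :: 'a set" False]
    by (simp add: coins_def map_pmf_eq_bernoulli_pmf no_subtree_prob_def
        measure_pmf_prob_Collect_not)
  finally have "map_pmf h (pair_pmf W Q) = pair_pmf W (coins (1 - no_subtree_prob W \<A> n))"
    using map_pair[of "\<lambda>X. X" "\<lambda>F i. has_subtree_upto \<A> n (F i)" W Q] by (simp add: h_def)
  moreover have "no_subtree_prob W \<A> (Suc n)
      = measure_pmf.prob (map_pmf h (pair_pmf W Q)) {(X, f). {i \<in> X. f i} \<notin> upclosure \<A>}"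
    unfolding no_subtree_prob_def offspring_upto_Suc Q_def h_def
    by (simp add: vimage_def case_prod_beta)
  ultimately show ?thesis by (simp only: g_fun_eq_prob_coins)
qed

lemma prob_space_gw_space: "prob_space (gw_space W)"
  unfolding gw_space_def by (rule prob_space_PiM) (simp add: measure_pmf.prob_space_axioms)

lemma has_subtree_upto_restrict:
  "has_subtree_upto \<A> n (restrict \<omega> (short_words n)) = has_subtree_upto \<A> n \<omega>"
  by (rule has_subtree_upto_cong) (simp add: short_words_def)

lemma sets_gw_space_has_subtree_upto:
  fixes W :: "'a::finite set pmf"
  shows "{\<omega> \<in> space (gw_space W). has_subtree_upto \<A> n \<omega>} \<in> sets (gw_space W)"
  unfolding gw_space_def
  by (rule measure_PiM_pmf_cylinder(1)[where P = "has_subtree_upto \<A> n",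
        OF finite_short_words subset_UNIV has_subtree_upto_restrict])

lemma measure_gw_space_has_subtree_upto:
  fixes W :: "'a::finite set pmf"
  shows "measure (gw_space W) {\<omega> \<in> space (gw_space W). has_subtree_upto \<A> n \<omega>}
    = 1 - no_subtree_prob W \<A> n"
  unfolding gw_space_def
  by (subst measure_PiM_pmf_cylinder(2)[where P = "has_subtree_upto \<A> n",
        OF finite_short_words subset_UNIV has_subtree_upto_restrict])
    (simp add: no_subtree_prob_def offspring_upto_def measure_pmf_prob_Collect_not)

lemma no_subtree_prob_tendsto:
  fixes W :: "'a::finite set pmf"
  shows "no_subtree_prob W \<A> \<longlonglongrightarrow> 1 - tau W \<A>"
proof -
  interpret prob_space "gw_space W" by (rule prob_space_gw_space)
  define E where "E n = {\<omega> \<in> space (gw_space W). has_subtree_upto \<A> n \<omega>}" for n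
  have "range E \<subseteq> sets (gw_space W)"
    using sets_gw_space_has_subtree_upto by (auto simp: E_def)
  moreover have "decseq E"
    unfolding decseq_def E_def using has_subtree_upto_antimono by blast
  ultimately have "(\<lambda>n. measure (gw_space W) (E n)) \<longlonglongrightarrow> measure (gw_space W) (\<Inter>n. E n)"
    by (rule finite_Lim_measure_decseq)
  moreover have "(\<Inter>n. E n) = {\<omega> \<in> space (gw_space W). \<exists>S. is_subtree_in \<A> S (gw_tree \<omega>)}"
    by (auto simp: E_def subtree_iff_has_subtree_upto_all)
  ultimately have "(\<lambda>n. 1 - no_subtree_prob W \<A> n) \<longlonglongrightarrow> tau W \<A>"
    by (simp add: E_def tau_def measure_gw_space_has_subtree_upto)
  then have "(\<lambda>n. 1 - (1 - no_subtree_prob W \<A> n)) \<longlonglongrightarrow> 1 - tau W \<A>"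
    by (intro tendsto_diff tendsto_const)
  then show ?thesis by simp
qed

theorem theorem2p10:
  fixes W :: "'a::finite set pmf" and \<A> :: "'a set set"
  assumes "\<And>i. measure_pmf.prob W {X. i \<in> X} > 0"
    and "\<A> \<noteq> {}" and "\<forall>X\<in>\<A>. X \<noteq> {}"
  shows "0 \<le> 1 - tau W \<A> \<and> 1 - tau W \<A> \<le> 1
       \<and> g_fun W \<A> (1 - tau W \<A>) = 1 - tau W \<A>
       \<and> (\<forall>s\<in>{0..1}. g_fun W \<A> s = s \<longrightarrow> 1 - tau W \<A> \<le> s)"
proof -
  have "g_fun W \<A> s \<in> {0..1}" for s
    by (simp add: g_fun_def)
  note fixed_point = iterates_tendsto_least_fixed_point[OF continuous_on_g_fun g_fun_mono this
      no_subtree_prob_0 no_subtree_prob_Suc no_subtree_prob_tendsto]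
  show ?thesis using fixed_point by auto
qed

end
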